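(* Consider the Boston mechanism on a finite set $S$ of students and a finite set $C$ of colleges, as described in the context, and suppose $S=N\sqcup M'$, where students in $N$ (sincere) can only submit their true preference ranking, while students in $M'$ (sophisticated) may submit any ranking. Consider the simultaneous-move game in which each student chooses a submitted ranking from their action set and receives the college assigned by the Boston mechanism, evaluated by their true preferences. Then every sincere student $s\in N$ is assigned the same college (or outside option) in every pure-strategy Nash equilibrium of this game.
   Context: Each student $s$ has a strict true preference order $\succ_s$ over $C\cup\{\emptyset\}$ ($\emptyset$ = unassigned). Each college $c$ has a capacity $q_c\geq 1$ and a strict priority ranking $\succ_c$ over $S$. Each student submits a strict ranking of (a subset of) colleges. The Boston mechanism runs in rounds $k=1,2,\dots$: in round $k$, every student not yet assigned applies to the $k$-th college on their submitted ranking (if any); each college, considering only its round-$k$ applicants, permanently assigns them in order of its priority ranking up to its remaining capacity and rejects the rest; assignments are final. Students never assigned receive $\emptyset$. A pure-strategy Nash equilibrium is a profile of submitted rankings, each in the respective student's action set, such that no student can obtain a strictly better assignment (according to their true preferences) by unilaterally changing to another ranking in their action set. *)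

theory Defs
  imports Main
begin

text \<open>An assignment is 's \<Rightarrow> 'c option,
  with None the outside option (unassigned). A submitted ranking is a list of colleges
  (position 0 = first choice). True preferences of student s are a strict relation
  pref s on 'c option ((x,y) \<in> pref s means x is strictly preferred to y); priorities
  of college c are a strict relation prio c on students ((t,s) \<in> prio c means t has
  higher priority than s).\<close>

definition applicants ::
  "'s set \<Rightarrow> ('s \<Rightarrow> 'c list) \<Rightarrow> ('s \<Rightarrow> 'c option) \<Rightarrow> nat \<Rightarrow> 'c \<Rightarrow> 's set" where
  "applicants S P A k c = {s \<in> S. A s = None \<and> k < length (P s) \<and> P s ! k = c}"

definition remaining_cap ::
  "'s set \<Rightarrow> ('c \<Rightarrow> nat) \<Rightarrow> ('s \<Rightarrow> 'c option) \<Rightarrow> 'c \<Rightarrow> nat" where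
  "remaining_cap S q A c = q c - card {s \<in> S. A s = Some c}"

text \<open>Round k (0-indexed) of the Boston mechanism: each unassigned student applies to
  the k-th college of her list; college c permanently accepts its round-k applicants in
  priority order up to its remaining capacity.\<close>
definition boston_step ::
  "'s set \<Rightarrow> ('c \<Rightarrow> nat) \<Rightarrow> ('c \<Rightarrow> ('s \<times> 's) set) \<Rightarrow> ('s \<Rightarrow> 'c list) \<Rightarrow> nat
    \<Rightarrow> ('s \<Rightarrow> 'c option) \<Rightarrow> ('s \<Rightarrow> 'c option)" where
  "boston_step S q prio P k A = (\<lambda>s.
     if s \<in> applicants S P A k (P s ! k) \<and>
        card {t \<in> applicants S P A k (P s ! k). (t, s) \<in> prio (P s ! k)}
          < remaining_cap S q A (P s ! k)
     then Some (P s ! k) else A s)"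

fun boston_upto ::
  "'s set \<Rightarrow> ('c \<Rightarrow> nat) \<Rightarrow> ('c \<Rightarrow> ('s \<times> 's) set) \<Rightarrow> ('s \<Rightarrow> 'c list) \<Rightarrow> nat
    \<Rightarrow> ('s \<Rightarrow> 'c option)" where
  "boston_upto S q prio P 0 = (\<lambda>_. None)"
| "boston_upto S q prio P (Suc k) = boston_step S q prio P k (boston_upto S q prio P k)"

definition boston ::
  "'s set \<Rightarrow> ('c \<Rightarrow> nat) \<Rightarrow> ('c \<Rightarrow> ('s \<times> 's) set) \<Rightarrow> ('s \<Rightarrow> 'c list) \<Rightarrow> ('s \<Rightarrow> 'c option)" where
  "boston S q prio P = boston_upto S q prio P (Max (insert 0 ((\<lambda>s. length (P s)) ` S)))"

definition true_ranking :: "'c set \<Rightarrow> ('c option \<times> 'c option) set \<Rightarrow> 'c list \<Rightarrow> bool" where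
  "true_ranking C R L \<longleftrightarrow> distinct L \<and> set L = {c \<in> C. (Some c, None) \<in> R}
      \<and> sorted_wrt (\<lambda>a b. (Some a, Some b) \<in> R) L"

definition action_set ::
  "'c set \<Rightarrow> ('s \<Rightarrow> ('c option \<times> 'c option) set) \<Rightarrow> 's set \<Rightarrow> 's \<Rightarrow> 'c list set" where
  "action_set C pref N s =
     (if s \<in> N then {L. true_ranking C (pref s) L} else {L. distinct L \<and> set L \<subseteq> C})"

definition pure_nash ::
  "'s set \<Rightarrow> 'c set \<Rightarrow> ('c \<Rightarrow> nat) \<Rightarrow> ('c \<Rightarrow> ('s \<times> 's) set)
    \<Rightarrow> ('s \<Rightarrow> ('c option \<times> 'c option) set) \<Rightarrow> 's set \<Rightarrow> ('s \<Rightarrow> 'c list) \<Rightarrow> bool" where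
  "pure_nash S C q prio pref N P \<longleftrightarrow>
     (\<forall>s \<in> S. P s \<in> action_set C pref N s) \<and>
     (\<forall>s \<in> S. \<forall>L \<in> action_set C pref N s.
        (boston S q prio (P(s := L)) s, boston S q prio P s) \<notin> pref s)"

end

theory Submission
  imports Defs
begin

text \<open>In a Nash equilibrium the Boston outcome is stable for modified priorities: at a
  college c, a student's class is the round in which she can apply to c (for a sincere student
  the number of colleges she prefers to c, for a sophisticated one 0), ties being broken by the
  priority of c. These priorities do not depend on the equilibrium, since sincere rankings are
  forced. Given two matchings stable for them, look at the students who strictly prefer the
  first to the second. Counting seats shows that under the second matching they occupy only
  colleges they held under the first. If such a student is sincere, take one, x, whose college
  under the first matching has maximal class; her college d under the second matching was held
  under the first by another such student z, and x outranks z at d. Then z's class at d is at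
  least x's class at d, which exceeds x's class at her first college, so z is sincere with a
  larger class than x: a contradiction. Hence a sincere student strictly prefers neither of her
  two equilibrium assignments to the other, so they coincide.\<close>

lemma card_rank_less:
  assumes "finite X" and "X \<subseteq> A" and "strict_linear_order_on A r"
  shows "card {a \<in> X. card {b \<in> X. (b, a) \<in> r} < n} = min n (card X)"
proof -
  define rank where "rank a = card {b \<in> X. (b, a) \<in> r}" for a
  have r: "trans r" "irrefl r" "total_on A r"
    using assms(3) by (auto simp: strict_linear_order_on_def)
  have rank_less: "rank a < rank a'" if "a \<in> X" "(a, a') \<in> r" for a a'
  proof -
    have "insert a {b \<in> X. (b, a) \<in> r} \<subseteq> {b \<in> X. (b, a') \<in> r}"
      using that r(1) unfolding trans_def by blast
    moreover have "a \<notin> {b \<in> X. (b, a) \<in> r}"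
      using r(2) by (auto simp: irrefl_on_def)
    ultimately show ?thesis
      unfolding rank_def using assms(1)
      by (metis (no_types, lifting) card_insert_disjoint card_mono finite_subset mem_Collect_eq subsetI Suc_le_eq)
  qed
  have inj: "inj_on rank X"
  proof (rule inj_onI)
    fix a a' assume "a \<in> X" "a' \<in> X" "rank a = rank a'"
    then show "a = a'"
      using r(3) assms(2) rank_less unfolding total_on_def by (metis less_irrefl subsetD)
  qed
  have "rank a < card X" if "a \<in> X" for a
  proof -
    have "{b \<in> X. (b, a) \<in> r} \<subset> X" using that r(2) by (auto simp: irrefl_on_def)
    then show ?thesis unfolding rank_def using assms(1) by (simp add: psubset_card_mono)
  qed
  then have "rank ` X \<subseteq> {..<card X}"
    by auto
  then have "rank ` X = {..<card X}"
    using inj by (simp add: card_image card_subset_eq)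
  then have "rank ` {a \<in> X. rank a < n} = {..<card X} \<inter> {..<n}"
    by auto
  also have "\<dots> = {..<min n (card X)}"
    by auto
  finally have "rank ` {a \<in> X. rank a < n} = {..<min n (card X)}" .
  moreover have "inj_on rank {a \<in> X. rank a < n}"
    using inj by (rule inj_on_subset) auto
  ultimately have "card {a \<in> X. rank a < n} = card {..<min n (card X)}"
    by (metis card_image)
  then show ?thesis
    by (simp add: rank_def)
qed

context
  fixes S :: "'s set" and q :: "'c \<Rightarrow> nat" and prio :: "'c \<Rightarrow> ('s \<times> 's) set"
    and P :: "'s \<Rightarrow> 'c list"
begin

definition round_applicants :: "nat \<Rightarrow> 'c \<Rightarrow> 's set" where
  "round_applicants k c = applicants S P (boston_upto S q prio P k) k c"

definition holders :: "nat \<Rightarrow> 'c \<Rightarrow> 's set" where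
  "holders k c = {s \<in> S. boston_upto S q prio P k s = Some c}"

definition round_accepted :: "nat \<Rightarrow> 'c \<Rightarrow> 's set" where
  "round_accepted k c = {s \<in> round_applicants k c.
     card {t \<in> round_applicants k c. (t, s) \<in> prio c} < q c - card (holders k c)}"

lemma round_applicants_iff:
  "s \<in> round_applicants k c \<longleftrightarrow>
     s \<in> S \<and> boston_upto S q prio P k s = None \<and> k < length (P s) \<and> P s ! k = c"
  by (simp add: round_applicants_def applicants_def)

lemma round_acceptedD:
  "s \<in> round_accepted k c \<Longrightarrow>
     s \<in> S \<and> boston_upto S q prio P k s = None \<and> k < length (P s) \<and> P s ! k = c"
  by (simp add: round_accepted_def round_applicants_iff)

lemma boston_upto_Suc_eq_Some:
  "boston_upto S q prio P (Suc k) s = Some c \<longleftrightarrow>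
     boston_upto S q prio P k s = Some c \<or> s \<in> round_accepted k c"
proof (cases "boston_upto S q prio P k s")
  case None
  then show ?thesis
    by (auto simp: boston_step_def round_accepted_def round_applicants_def holders_def
        remaining_cap_def applicants_def)
next
  case (Some d)
  then have "s \<notin> applicants S P (boston_upto S q prio P k) k c'" for c'
    by (simp add: applicants_def)
  then show ?thesis
    using Some by (auto simp: boston_step_def round_accepted_def round_applicants_def)
qed

lemma boston_upto_Some_mono:
  assumes "boston_upto S q prio P k s = Some c" and "k \<le> k'"
  shows "boston_upto S q prio P k' s = Some c"
  using assms(2) by (induction k' rule: dec_induct) (use assms(1) boston_upto_Suc_eq_Some in auto)

lemma boston_upto_None_antimono:
  "boston_upto S q prio P k' s = None \<Longrightarrow> k \<le> k' \<Longrightarrow> boston_upto S q prio P k s = None"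
  by (cases "boston_upto S q prio P k s") (auto dest: boston_upto_Some_mono)

lemma boston_upto_SomeE:
  assumes "boston_upto S q prio P k s = Some c"
  obtains j where "j < k" and "s \<in> round_accepted j c"
  using assms
proof (induction k)
  case (Suc k)
  show ?case
  proof (cases "boston_upto S q prio P k s = Some c")
    case True
    then show ?thesis using Suc.IH Suc.prems(1) less_SucI by blast
  next
    case False
    then show ?thesis using Suc.prems boston_upto_Suc_eq_Some by blast
  qed
qed simp

lemma boston_upto_Some_in_set:
  "boston_upto S q prio P k s = Some c \<Longrightarrow> c \<in> set (P s)"
  by (erule boston_upto_SomeE) (auto dest!: round_acceptedD)

lemma holders_Suc: "holders (Suc k) c = holders k c \<union> round_accepted k c"
  using round_acceptedD
  by (auto simp del: boston_upto.simps simp: holders_def boston_upto_Suc_eq_Some)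

lemma holders_disjoint_round_accepted: "holders k c \<inter> round_accepted k c = {}"
  by (auto simp: holders_def dest: round_acceptedD)

lemma card_round_accepted:
  assumes "finite S" and "strict_linear_order_on S (prio c)"
  shows "card (round_accepted k c) = min (q c - card (holders k c)) (card (round_applicants k c))"
  unfolding round_accepted_def
  by (rule card_rank_less)
    (use assms in \<open>auto simp: round_applicants_iff intro: finite_subset[of _ S]\<close>)

lemma card_holders_Suc:
  assumes "finite S"
  shows "card (holders (Suc k) c) = card (holders k c) + card (round_accepted k c)"
proof -
  have "finite (holders k c)" "finite (round_accepted k c)"
    using assms round_acceptedD by (auto simp: holders_def intro: finite_subset[of _ S])
  then show ?thesis
    unfolding holders_Suc using holders_disjoint_round_accepted by (simp add: card_Un_disjoint)
qed

lemma card_holders_le_capacity: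
  assumes "finite S" and "strict_linear_order_on S (prio c)"
  shows "card (holders k c) \<le> q c"
proof (induction k)
  case (Suc k)
  then show ?case
    using card_holders_Suc[OF assms(1)] card_round_accepted[OF assms] by simp
qed (simp add: holders_def)

lemma card_holders_Suc_eq_capacity:
  assumes "finite S" and "strict_linear_order_on S (prio c)"
    and "H \<subseteq> round_applicants k c" and "q c - card (holders k c) \<le> card H"
  shows "card (holders (Suc k) c) = q c"
proof -
  have "finite (round_applicants k c)"
    using assms(1) by (auto simp: round_applicants_iff intro: finite_subset)
  then have "card H \<le> card (round_applicants k c)"
    using assms(3) by (rule card_mono)
  then show ?thesis
    using assms card_holders_Suc card_round_accepted card_holders_le_capacity by fastforce
qed

lemma holders_const_if_full:
  assumes "card (holders k c) = q c" and "k \<le> k'"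
  shows "holders k' c = holders k c"
  using assms(2)
proof (induction k' rule: dec_induct)
  case (step n)
  then have "round_accepted n c = {}"
    using assms(1) by (simp add: round_accepted_def)
  then show ?case
    using step.IH by (simp add: holders_Suc)
qed simp

lemma round_accepted_prio:
  assumes "finite S" and "strict_linear_order_on S (prio c)"
    and "H \<subseteq> {t \<in> round_applicants k c. (t, x) \<in> prio c}" and "q c - card (holders k c) \<le> card H"
    and "y \<in> round_accepted k c" and "y \<noteq> x" and "x \<in> S"
  shows "(y, x) \<in> prio c"
proof (rule ccontr)
  assume "(y, x) \<notin> prio c"
  then have "(x, y) \<in> prio c"
    using assms(2,5-7) round_acceptedD unfolding strict_linear_order_on_def total_on_def by blast
  then have "H \<subseteq> {t \<in> round_applicants k c. (t, y) \<in> prio c}"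
    using assms(2,3) unfolding strict_linear_order_on_def trans_def by blast
  moreover have "finite {t \<in> round_applicants k c. (t, y) \<in> prio c}"
    using assms(1) by (auto simp: round_applicants_iff intro: finite_subset)
  ultimately have "card H \<le> card {t \<in> round_applicants k c. (t, y) \<in> prio c}"
    by (simp add: card_mono)
  then show False
    using assms(4,5) by (simp add: round_accepted_def)
qed

end

definition boston_rounds :: "'s set \<Rightarrow> ('s \<Rightarrow> 'c list) \<Rightarrow> nat" where
  "boston_rounds S P = Max (insert 0 ((\<lambda>s. length (P s)) ` S))"

lemma boston_eq_boston_upto_rounds:
  "boston S q prio P = boston_upto S q prio P (boston_rounds S P)"
  by (simp add: boston_def boston_rounds_def)

lemma length_le_boston_rounds: "finite S \<Longrightarrow> s \<in> S \<Longrightarrow> length (P s) \<le> boston_rounds S P"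
  by (simp add: boston_rounds_def)

lemma boston_Nil_ranking: "boston S q prio (P(x := [])) x = None"
proof -
  have "boston_upto S q prio (P(x := [])) k x = None" for k
    using boston_upto_Some_in_set[of S q prio "P(x := [])" k x]
    by (cases "boston_upto S q prio (P(x := [])) k x") auto
  then show ?thesis
    by (simp add: boston_def)
qed

lemma boston_singleton_ranking:
  assumes "finite S" and "x \<in> S" and "(x, x) \<notin> prio c"
    and "card {t \<in> S. t \<noteq> x \<and> P t \<noteq> [] \<and> P t ! 0 = c \<and> (t, x) \<in> prio c} < q c"
  shows "boston S q prio (P(x := [c])) x = Some c"
proof -
  define P' where "P' = P(x := [c])"
  have applicants: "round_applicants S q prio P' 0 c = {t \<in> S. P' t \<noteq> [] \<and> P' t ! 0 = c}"
    by (auto simp: round_applicants_iff)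
  have "{t \<in> round_applicants S q prio P' 0 c. (t, x) \<in> prio c}
      = {t \<in> S. t \<noteq> x \<and> P t \<noteq> [] \<and> P t ! 0 = c \<and> (t, x) \<in> prio c}"
    unfolding applicants using assms(3) by (auto simp: P'_def)
  moreover have "holders S q prio P' 0 c = {}"
    by (simp add: holders_def)
  moreover have "x \<in> round_applicants S q prio P' 0 c"
    unfolding applicants using assms(2) by (simp add: P'_def)
  ultimately have "x \<in> round_accepted S q prio P' 0 c"
    using assms(4) by (simp add: round_accepted_def)
  then have "boston_upto S q prio P' (Suc 0) x = Some c"
    using boston_upto_Suc_eq_Some[of S q prio P' 0 x c] by blast
  moreover have "Suc 0 \<le> boston_rounds S P'"
    using length_le_boston_rounds[OF assms(1,2), of P'] by (simp add: P'_def)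
  ultimately have "boston S q prio P' x = Some c"
    unfolding boston_eq_boston_upto_rounds by (rule boston_upto_Some_mono)
  then show ?thesis
    by (simp add: P'_def)
qed

locale strict_preferences =
  fixes S :: "'s set" and C :: "'c set" and pref :: "'s \<Rightarrow> ('c option \<times> 'c option) set"
  assumes pref_order: "\<And>x. x \<in> S \<Longrightarrow> strict_linear_order_on (insert None (Some ` C)) (pref x)"
begin

lemma pref_trans: "x \<in> S \<Longrightarrow> (a, b) \<in> pref x \<Longrightarrow> (b, c) \<in> pref x \<Longrightarrow> (a, c) \<in> pref x"
  using pref_order unfolding strict_linear_order_on_def trans_def by blast

lemma pref_irrefl: "x \<in> S \<Longrightarrow> (a, a) \<notin> pref x"
  using pref_order unfolding strict_linear_order_on_def irrefl_on_def by blast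

lemma pref_total:
  "x \<in> S \<Longrightarrow> a \<in> insert None (Some ` C) \<Longrightarrow> b \<in> insert None (Some ` C) \<Longrightarrow> a \<noteq> b \<Longrightarrow>
    (a, b) \<in> pref x \<or> (b, a) \<in> pref x"
  using pref_order unfolding strict_linear_order_on_def total_on_def by blast

end

definition outranks ::
  "('s \<Rightarrow> 'c \<Rightarrow> nat) \<Rightarrow> ('c \<Rightarrow> ('s \<times> 's) set) \<Rightarrow> 's \<Rightarrow> 's \<Rightarrow> 'c \<Rightarrow> bool" where
  "outranks cls prio y x c \<longleftrightarrow> cls y c < cls x c \<or> cls y c = cls x c \<and> (y, x) \<in> prio c"

definition stable_wrt ::
  "'s set \<Rightarrow> 'c set \<Rightarrow> ('c \<Rightarrow> nat) \<Rightarrow> ('c \<Rightarrow> ('s \<times> 's) set)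
    \<Rightarrow> ('s \<Rightarrow> ('c option \<times> 'c option) set) \<Rightarrow> ('s \<Rightarrow> 'c \<Rightarrow> nat) \<Rightarrow> ('s \<Rightarrow> 'c option) \<Rightarrow> bool"
where
  "stable_wrt S C q prio pref cls \<mu> \<longleftrightarrow>
     (\<forall>x \<in> S. \<mu> x \<in> insert None (Some ` C)) \<and>
     (\<forall>x \<in> S. \<mu> x = None \<or> (\<mu> x, None) \<in> pref x) \<and>
     (\<forall>c \<in> C. card {x \<in> S. \<mu> x = Some c} \<le> q c) \<and>
     (\<forall>x \<in> S. \<forall>c \<in> C. (Some c, \<mu> x) \<in> pref x \<longrightarrow>
        q c \<le> card {y \<in> S. \<mu> y = Some c} \<and>
        (\<forall>y \<in> S. \<mu> y = Some c \<longrightarrow> outranks cls prio y x c))"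

locale two_stable_matchings = strict_preferences S C pref
  for S :: "'s set" and C :: "'c set" and pref :: "'s \<Rightarrow> ('c option \<times> 'c option) set" +
  fixes N :: "'s set" and q :: "'c \<Rightarrow> nat" and prio :: "'c \<Rightarrow> ('s \<times> 's) set"
    and cls :: "'s \<Rightarrow> 'c \<Rightarrow> nat" and \<mu> \<nu> :: "'s \<Rightarrow> 'c option"
  assumes finite_S: "finite S"
    and prio_asym: "\<And>c x y. c \<in> C \<Longrightarrow> (x, y) \<in> prio c \<Longrightarrow> (y, x) \<notin> prio c"
    and cls_outside_N: "\<And>x c. x \<notin> N \<Longrightarrow> cls x c = 0"
    and cls_pref_mono: "\<And>x d e. x \<in> S \<Longrightarrow> x \<in> N \<Longrightarrow> d \<in> C \<Longrightarrow> e \<in> C \<Longrightarrow>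
      (Some d, Some e) \<in> pref x \<Longrightarrow> cls x d < cls x e"
    and stable_\<mu>: "stable_wrt S C q prio pref cls \<mu>"
    and stable_\<nu>: "stable_wrt S C q prio pref cls \<nu>"
begin

lemma matched_in_C:
  "x \<in> S \<Longrightarrow> \<mu> x \<in> insert None (Some ` C)" "x \<in> S \<Longrightarrow> \<nu> x \<in> insert None (Some ` C)"
  using stable_\<mu> stable_\<nu> by (auto simp: stable_wrt_def)

definition improvers :: "'s set" where
  "improvers = {x \<in> S. (\<mu> x, \<nu> x) \<in> pref x}"

lemma improver_matched:
  assumes "x \<in> improvers"
  obtains c where "c \<in> C" and "\<mu> x = Some c"
proof -
  have x: "x \<in> S" "(\<mu> x, \<nu> x) \<in> pref x"
    using assms by (auto simp: improvers_def)
  have "\<mu> x \<noteq> None"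
  proof
    assume "\<mu> x = None"
    moreover have "(\<nu> x, None) \<in> pref x"
      using stable_\<nu> x \<open>\<mu> x = None\<close> pref_irrefl[of x None] by (auto simp: stable_wrt_def)
    ultimately show False
      using x pref_trans pref_irrefl by metis
  qed
  then show thesis
    using that stable_\<mu> x(1) by (auto simp: stable_wrt_def)
qed

lemma improver_college_in_C: "x \<in> improvers \<Longrightarrow> \<mu> x = Some c \<Longrightarrow> c \<in> C"
  by (metis improver_matched option.inject)

lemma improver_college_full:
  assumes "x \<in> improvers" and "\<mu> x = Some c"
  shows "q c \<le> card {y \<in> S. \<nu> y = Some c}"
    and "\<And>y. y \<in> S \<Longrightarrow> \<nu> y = Some c \<Longrightarrow> outranks cls prio y x c"
proof -
  have "c \<in> C"
    using improver_college_in_C[OF assms] .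
  moreover have "x \<in> S" and "(Some c, \<nu> x) \<in> pref x"
    using assms by (auto simp: improvers_def)
  ultimately show "q c \<le> card {y \<in> S. \<nu> y = Some c}"
    and "\<And>y. y \<in> S \<Longrightarrow> \<nu> y = Some c \<Longrightarrow> outranks cls prio y x c"
    using stable_\<nu> by (auto simp: stable_wrt_def)
qed

lemma entrant_is_improver:
  assumes "x \<in> improvers" and "\<mu> x = Some c"
    and "y \<in> S" and "\<nu> y = Some c" and "\<mu> y \<noteq> Some c"
  shows "y \<in> improvers"
proof (rule ccontr)
  assume "y \<notin> improvers"
  then have "(\<nu> y, \<mu> y) \<in> pref y"
    using assms(3-5) pref_total[OF assms(3) matched_in_C[OF assms(3)]]
    by (auto simp: improvers_def)
  moreover have "x \<in> S" and "c \<in> C"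
    using assms(1) improver_college_in_C[OF assms(1,2)] by (auto simp: improvers_def)
  ultimately have "outranks cls prio x y c"
    using assms stable_\<mu> by (auto simp: stable_wrt_def)
  moreover have "outranks cls prio y x c"
    using improver_college_full(2)[OF assms(1,2,3,4)] .
  ultimately show False
    using prio_asym[OF \<open>c \<in> C\<close>] by (auto simp: outranks_def)
qed

text \<open>Every entrant of c is an improver and c is at capacity under \<nu>, so improvers
  enter c at least as often as they leave it.\<close>
lemma card_improvers_leaving_le_entering:
  assumes "x \<in> improvers" and "\<mu> x = Some c"
  shows "card {y \<in> improvers. \<mu> y = Some c} \<le> card {y \<in> improvers. \<nu> y = Some c}"
proof -
  define U where "U = {y \<in> S. \<mu> y = Some c}"
  define V where "V = {y \<in> S. \<nu> y = Some c}"
  have finite: "finite U" "finite V" "finite improvers"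
    using finite_S by (auto simp: U_def V_def improvers_def)
  have "card {y \<in> improvers. \<mu> y = Some c} \<le> card (U - V)"
    using finite pref_irrefl by (intro card_mono) (auto simp: U_def V_def improvers_def)
  also have "\<dots> = card U - card (U \<inter> V)"
    using finite by (simp add: card_Diff_subset_Int)
  also have "\<dots> \<le> card V - card (V \<inter> U)"
    using stable_\<mu> improver_college_in_C[OF assms] improver_college_full(1)[OF assms]
    by (auto simp: stable_wrt_def U_def V_def Int_commute)
  also have "\<dots> = card (V - U)"
    using finite by (simp add: card_Diff_subset_Int)
  also have "\<dots> \<le> card {y \<in> improvers. \<nu> y = Some c}"
    using finite entrant_is_improver[OF assms] by (intro card_mono) (auto simp: U_def V_def)
  finally show ?thesis .
qed

lemma improver_moves_to_improver_college:
  assumes "y \<in> improvers"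
  obtains x where "x \<in> improvers" and "\<nu> y = \<mu> x"
proof -
  define T where "T = {c. \<exists>x \<in> improvers. \<mu> x = Some c}"
  have "T \<subseteq> the ` \<mu> ` improvers"
    unfolding T_def by force
  then have finite: "finite improvers" "finite T"
    using finite_S by (auto simp: improvers_def intro: finite_subset)
  have "improvers = (\<Union>c \<in> T. {y \<in> improvers. \<mu> y = Some c})"
  proof
    show "improvers \<subseteq> (\<Union>c \<in> T. {y \<in> improvers. \<mu> y = Some c})"
    proof
      fix y assume "y \<in> improvers"
      moreover obtain c where "\<mu> y = Some c"
        using improver_matched[OF \<open>y \<in> improvers\<close>] by blast
      ultimately show "y \<in> (\<Union>c \<in> T. {y \<in> improvers. \<mu> y = Some c})"
        by (auto simp: T_def)
    qed
  qed (auto simp: T_def)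
  moreover have "card (\<Union>c \<in> T. {y \<in> improvers. \<mu> y = Some c})
      = (\<Sum>c \<in> T. card {y \<in> improvers. \<mu> y = Some c})"
    by (rule card_UN_disjoint) (use finite in auto)
  ultimately have "card improvers = (\<Sum>c \<in> T. card {y \<in> improvers. \<mu> y = Some c})"
    by simp
  also have "\<dots> \<le> (\<Sum>c \<in> T. card {y \<in> improvers. \<nu> y = Some c})"
    by (rule sum_mono) (auto simp: T_def intro: card_improvers_leaving_le_entering)
  also have "\<dots> = card (\<Union>c \<in> T. {y \<in> improvers. \<nu> y = Some c})"
    by (rule card_UN_disjoint[symmetric]) (use finite in auto)
  finally have "(\<Union>c \<in> T. {y \<in> improvers. \<nu> y = Some c}) = improvers"
    using finite by (intro card_seteq) auto
  then obtain c where "c \<in> T" and "\<nu> y = Some c"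
    using assms by blast
  then show thesis
    using that unfolding T_def by auto
qed

theorem sincere_not_improver:
  assumes "i \<in> N"
  shows "i \<notin> improvers"
proof
  assume "i \<in> improvers"
  define r where "r x = cls x (the (\<mu> x))" for x
  have finite: "finite (improvers \<inter> N)"
    using finite_S by (simp add: improvers_def)
  obtain x where x: "x \<in> improvers" "x \<in> N" and "r x = Max (r ` (improvers \<inter> N))"
    using Max_in[of "r ` (improvers \<inter> N)"] finite \<open>i \<in> improvers\<close> assms by fastforce
  then have r_max: "\<And>z. z \<in> improvers \<Longrightarrow> z \<in> N \<Longrightarrow> r z \<le> r x"
    using finite by simp
  have "x \<in> S"
    using x by (simp add: improvers_def)
  obtain e where e: "e \<in> C" "\<mu> x = Some e"
    using improver_matched[OF x(1)] .
  obtain z where z: "z \<in> improvers" "\<nu> x = \<mu> z"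
    using improver_moves_to_improver_college[OF x(1)] .
  obtain d where d: "d \<in> C" "\<mu> z = Some d"
    using improver_matched[OF z(1)] .
  have "outranks cls prio x z d"
    using improver_college_full(2)[OF z(1) d(2) \<open>x \<in> S\<close>] z(2) d(2) by simp
  then have "cls x d \<le> cls z d"
    by (auto simp: outranks_def)
  moreover have "cls x e < cls x d"
    using cls_pref_mono[OF \<open>x \<in> S\<close> x(2) e(1) d(1)] x(1) e(2) z(2) d(2) by (simp add: improvers_def)
  ultimately have "z \<in> N" and "r x < r z"
    using cls_outside_N e(2) d(2) by (fastforce simp: r_def)+
  then show False
    using r_max[OF z(1)] by simp
qed

theorem sincere_assignment_unique:
  assumes "i \<in> S" and "i \<in> N"
  shows "\<mu> i = \<nu> i"
proof -
  interpret swapped: two_stable_matchings S C pref N q prio cls \<nu> \<mu>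
    by unfold_locales (fact finite_S prio_asym cls_outside_N cls_pref_mono stable_\<nu> stable_\<mu>)+
  have "(\<mu> i, \<nu> i) \<notin> pref i" and "(\<nu> i, \<mu> i) \<notin> pref i"
    using sincere_not_improver[OF assms(2)] swapped.sincere_not_improver[OF assms(2)] assms(1)
    by (auto simp: improvers_def swapped.improvers_def)
  then show ?thesis
    using pref_total[OF assms(1) matched_in_C[OF assms(1)]] by blast
qed

end

definition pref_rank :: "'c set \<Rightarrow> ('c option \<times> 'c option) set \<Rightarrow> 'c \<Rightarrow> nat" where
  "pref_rank C R c = card {d \<in> C. (Some d, Some c) \<in> R}"

text \<open>The round in which x can apply to c: a sincere student reaches c after all colleges
  she prefers to it, a sophisticated student can rank c first.\<close>
definition priority_class ::
  "'c set \<Rightarrow> ('s \<Rightarrow> ('c option \<times> 'c option) set) \<Rightarrow> 's set \<Rightarrow> 's \<Rightarrow> 'c \<Rightarrow> nat" where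
  "priority_class C pref N x c = (if x \<in> N then pref_rank C (pref x) c else 0)"

lemma pref_rank_less:
  assumes "finite C" and "trans R" and "irrefl R" and "d \<in> C" and "(Some d, Some e) \<in> R"
  shows "pref_rank C R d < pref_rank C R e"
proof -
  have "{d' \<in> C. (Some d', Some d) \<in> R} \<subset> {d' \<in> C. (Some d', Some e) \<in> R}"
    using assms(2-5) unfolding trans_def irrefl_on_def by blast
  then show ?thesis
    unfolding pref_rank_def using assms(1) by (simp add: psubset_card_mono)
qed

lemma pref_rank_true_ranking_nth:
  assumes "strict_linear_order_on (insert None (Some ` C)) R" and "true_ranking C R L"
    and "j < length L"
  shows "pref_rank C R (L ! j) = j"
proof -
  have R: "trans R" "irrefl R"
    using assms(1) by (auto simp: strict_linear_order_on_def)
  have L: "distinct L" "set L = {c \<in> C. (Some c, None) \<in> R}"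
    and sorted: "\<And>i i'. i < i' \<Longrightarrow> i' < length L \<Longrightarrow> (Some (L ! i), Some (L ! i')) \<in> R"
    using assms(2) by (auto simp: true_ranking_def sorted_wrt_iff_nth_less)
  have "{d \<in> C. (Some d, Some (L ! j)) \<in> R} = set (take j L)"
  proof (intro equalityI subsetI)
    fix d assume d: "d \<in> {d \<in> C. (Some d, Some (L ! j)) \<in> R}"
    have "(Some (L ! j), None) \<in> R"
      using L(2) assms(3) nth_mem by blast
    then have "d \<in> set L"
      using d R(1) L(2) unfolding trans_def by blast
    then obtain i where i: "i < length L" "L ! i = d"
      by (auto simp: in_set_conv_nth)
    have "i < j"
    proof (rule ccontr)
      assume "\<not> i < j"
      then have "(Some (L ! j), Some d) \<in> R \<or> L ! j = d"
        using sorted[of j i] i by (cases "i = j") auto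
      then show False
        using d R unfolding trans_def irrefl_on_def by blast
    qed
    then show "d \<in> set (take j L)"
      using i by (auto simp: in_set_conv_nth)
  next
    fix d assume "d \<in> set (take j L)"
    then obtain i where "i < j" "L ! i = d"
      using assms(3) by (auto simp: in_set_conv_nth)
    then show "d \<in> {d \<in> C. (Some d, Some (L ! j)) \<in> R}"
      using sorted[of i j] assms(3) L(2) nth_mem[of i L] by auto
  qed
  then show ?thesis
    unfolding pref_rank_def using L(1) assms(3) by (simp add: distinct_card)
qed

locale boston_nash = strict_preferences S C pref
  for S :: "'s set" and C :: "'c set" and pref :: "'s \<Rightarrow> ('c option \<times> 'c option) set" +
  fixes N :: "'s set" and q :: "'c \<Rightarrow> nat" and prio :: "'c \<Rightarrow> ('s \<times> 's) set"
    and P :: "'s \<Rightarrow> 'c list"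
  assumes finite_S: "finite S"
    and N_subset: "N \<subseteq> S"
    and capacity_pos: "\<And>c. c \<in> C \<Longrightarrow> 1 \<le> q c"
    and prio_order: "\<And>c. c \<in> C \<Longrightarrow> strict_linear_order_on S (prio c)"
    and nash: "pure_nash S C q prio pref N P"
begin

abbreviation outcome :: "'s \<Rightarrow> 'c option" where
  "outcome \<equiv> boston S q prio P"

abbreviation cls :: "'s \<Rightarrow> 'c \<Rightarrow> nat" where
  "cls \<equiv> priority_class C pref N"

lemma ranking_admissible: "x \<in> S \<Longrightarrow> P x \<in> action_set C pref N x"
  using nash by (simp add: pure_nash_def)

lemma no_profitable_deviation:
  "x \<in> S \<Longrightarrow> L \<in> action_set C pref N x \<Longrightarrow> (boston S q prio (P(x := L)) x, outcome x) \<notin> pref x"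
  using nash by (simp add: pure_nash_def)

lemma sincere_true_ranking: "x \<in> N \<Longrightarrow> true_ranking C (pref x) (P x)"
  using ranking_admissible[of x] N_subset by (auto simp: action_set_def)

lemma ranking_subset_C: "x \<in> S \<Longrightarrow> set (P x) \<subseteq> C"
  using ranking_admissible[of x] by (auto simp: action_set_def true_ranking_def split: if_splits)

lemma outcome_eq_boston_upto: "outcome = boston_upto S q prio P (boston_rounds S P)"
  by (rule boston_eq_boston_upto_rounds)

lemma outcome_in_ranking: "outcome x = Some c \<Longrightarrow> c \<in> set (P x)"
  unfolding outcome_eq_boston_upto by (rule boston_upto_Some_in_set)

lemma outcome_range: "x \<in> S \<Longrightarrow> outcome x \<in> insert None (Some ` C)"
  using outcome_in_ranking[of x] ranking_subset_C[of x] by (cases "outcome x") auto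

lemma outcome_individually_rational:
  assumes "x \<in> S"
  shows "outcome x = None \<or> (outcome x, None) \<in> pref x"
proof (cases "x \<in> N")
  case True
  then show ?thesis
    using outcome_in_ranking sincere_true_ranking by (cases "outcome x") (auto simp: true_ranking_def)
next
  case False
  then have "[] \<in> action_set C pref N x"
    by (simp add: action_set_def)
  then have "(None, outcome x) \<notin> pref x"
    using no_profitable_deviation[OF assms] boston_Nil_ranking by metis
  then show ?thesis
    using pref_order[OF assms] outcome_range[OF assms]
    unfolding strict_linear_order_on_def total_on_def by blast
qed

lemma outcome_capacity: "c \<in> C \<Longrightarrow> card {x \<in> S. outcome x = Some c} \<le> q c"
  using card_holders_le_capacity[where prio = prio and c = c, OF finite_S prio_order]
  by (simp add: holders_def outcome_eq_boston_upto)

lemma priority_class_le_round: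
  assumes "y \<in> round_accepted S q prio P j c"
  shows "cls y c \<le> j"
proof (cases "y \<in> N")
  case True
  moreover have "j < length (P y)" and "P y ! j = c" and "y \<in> S"
    using round_acceptedD[OF assms] by auto
  ultimately show ?thesis
    using pref_rank_true_ranking_nth[OF pref_order sincere_true_ranking, of y j]
    by (simp add: priority_class_def)
qed (simp add: priority_class_def)

lemma overdemanded_college_outranks:
  assumes "x \<in> S" and "c \<in> C" and "cls x c = k" and "k < boston_rounds S P"
    and "outcome x \<noteq> Some c"
    and "H \<subseteq> {t \<in> round_applicants S q prio P k c. (t, x) \<in> prio c}"
    and "q c - card (holders S q prio P k c) \<le> card H"
  shows "q c \<le> card {y \<in> S. outcome y = Some c}"
    and "\<And>y. y \<in> S \<Longrightarrow> outcome y = Some c \<Longrightarrow> outranks cls prio y x c"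
proof -
  have full: "card (holders S q prio P (Suc k) c) = q c"
    using assms(6,7) by (intro card_holders_Suc_eq_capacity[where prio = prio and c = c, OF finite_S prio_order[OF assms(2)]]) auto
  then have final: "{y \<in> S. outcome y = Some c} = holders S q prio P (Suc k) c"
    using holders_const_if_full[OF full, of "boston_rounds S P"] assms(4)
    by (simp add: holders_def outcome_eq_boston_upto)
  then show "q c \<le> card {y \<in> S. outcome y = Some c}"
    using full by simp
  fix y assume "y \<in> S" and "outcome y = Some c"
  then have "boston_upto S q prio P (Suc k) y = Some c"
    using final by (auto simp: holders_def)
  then obtain j where "j < Suc k" and j: "y \<in> round_accepted S q prio P j c"
    by (rule boston_upto_SomeE)
  moreover have "(y, x) \<in> prio c" if "j = k"
    using round_accepted_prio[where prio = prio and c = c, OF finite_S prio_order[OF assms(2)] assms(6,7)] j that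
      \<open>outcome y = Some c\<close> assms(1,5) by blast
  ultimately show "outranks cls prio y x c"
    using priority_class_le_round[OF j] assms(3) by (auto simp: outranks_def)
qed

lemma sincere_blocked:
  assumes "x \<in> S" and "x \<in> N" and "c \<in> C" and "(Some c, outcome x) \<in> pref x"
  shows "q c \<le> card {y \<in> S. outcome y = Some c}"
    and "\<And>y. y \<in> S \<Longrightarrow> outcome y = Some c \<Longrightarrow> outranks cls prio y x c"
proof -
  have ranking: "true_ranking C (pref x) (P x)"
    using sincere_true_ranking[OF assms(2)] .
  have sorted: "\<And>i j. i < j \<Longrightarrow> j < length (P x) \<Longrightarrow> (Some (P x ! i), Some (P x ! j)) \<in> pref x"
    using ranking by (auto simp: true_ranking_def sorted_wrt_iff_nth_less)
  have "(Some c, None) \<in> pref x"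
    using outcome_individually_rational[OF assms(1)]
  proof
    assume "(outcome x, None) \<in> pref x"
    then show ?thesis
      using assms(4) pref_trans[OF assms(1), of "Some c" "outcome x" None] by blast
  qed (use assms(4) in simp)
  then have "c \<in> set (P x)"
    using ranking assms(3) by (simp add: true_ranking_def)
  then obtain k where k: "k < length (P x)" "P x ! k = c"
    by (metis in_set_conv_nth)
  have rounds: "k < boston_rounds S P"
    using k(1) length_le_boston_rounds[OF finite_S assms(1), of P] by simp
  have unassigned: "boston_upto S q prio P k x = None"
  proof (cases "outcome x")
    case None
    then show ?thesis
      using boston_upto_None_antimono[of S q prio P _ x k] rounds by (simp add: outcome_eq_boston_upto)
  next
    case (Some d)
    then obtain j where "x \<in> round_accepted S q prio P j d"
      unfolding outcome_eq_boston_upto by (metis boston_upto_SomeE)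
    then have j: "j < length (P x)" "P x ! j = d" "boston_upto S q prio P j x = None"
      by (auto dest: round_acceptedD)
    have "k < j"
    proof (rule ccontr)
      assume "\<not> k < j"
      then have "(Some d, Some c) \<in> pref x \<or> d = c"
        using sorted[of j k] j k by (cases "j = k") auto
      then show False
        using assms(4) Some pref_trans[OF assms(1), of "Some d" "Some c" "Some d"]
          pref_irrefl[OF assms(1)] by auto
    qed
    then show ?thesis
      using j(3) boston_upto_None_antimono[of S q prio P j x k] by simp
  qed
  have "x \<in> round_applicants S q prio P k c"
    using assms(1) unassigned k by (simp add: round_applicants_iff)
  moreover have "x \<notin> round_accepted S q prio P k c"
  proof
    assume "x \<in> round_accepted S q prio P k c"
    then have "boston_upto S q prio P (Suc k) x = Some c"
      using boston_upto_Suc_eq_Some[of S q prio P k x c] by blast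
    then have "outcome x = Some c"
      unfolding outcome_eq_boston_upto by (rule boston_upto_Some_mono) (use rounds in simp)
    then show False
      using assms(4) pref_irrefl[OF assms(1)] by simp
  qed
  ultimately have overdemanded: "q c - card (holders S q prio P k c)
      \<le> card {t \<in> round_applicants S q prio P k c. (t, x) \<in> prio c}"
    by (simp add: round_accepted_def)
  have "cls x c = k"
    using pref_rank_true_ranking_nth[OF pref_order[OF assms(1)] ranking k(1)] k(2) assms(2)
    by (simp add: priority_class_def)
  moreover have "outcome x \<noteq> Some c"
    using assms(4) pref_irrefl[OF assms(1)] by auto
  ultimately show "q c \<le> card {y \<in> S. outcome y = Some c}"
    and "\<And>y. y \<in> S \<Longrightarrow> outcome y = Some c \<Longrightarrow> outranks cls prio y x c"
    using overdemanded_college_outranks[OF assms(1,3) _ rounds _ order.refl overdemanded] by auto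
qed

lemma sophisticated_blocked:
  assumes "x \<in> S" and "x \<notin> N" and "c \<in> C" and "(Some c, outcome x) \<in> pref x"
  shows "q c \<le> card {y \<in> S. outcome y = Some c}"
    and "\<And>y. y \<in> S \<Longrightarrow> outcome y = Some c \<Longrightarrow> outranks cls prio y x c"
proof -
  define H where "H = {t \<in> S. t \<noteq> x \<and> P t \<noteq> [] \<and> P t ! 0 = c \<and> (t, x) \<in> prio c}"
  have "[c] \<in> action_set C pref N x"
    using assms(2,3) by (simp add: action_set_def)
  then have "boston S q prio (P(x := [c])) x \<noteq> Some c"
    using no_profitable_deviation[OF assms(1)] assms(4) by metis
  moreover have "(x, x) \<notin> prio c"
    using prio_order[OF assms(3)] by (simp add: strict_linear_order_on_def irrefl_on_def)
  ultimately have overdemanded: "q c \<le> card H"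
    using boston_singleton_ranking[OF finite_S assms(1), of prio c P q] unfolding H_def
    by (meson not_less)
  then obtain t where "t \<in> H"
    using capacity_pos[OF assms(3)] by fastforce
  then have "0 < length (P t)" and "length (P t) \<le> boston_rounds S P"
    using length_le_boston_rounds[OF finite_S, of t P] by (auto simp: H_def)
  then have rounds: "0 < boston_rounds S P"
    by linarith
  have "H \<subseteq> {t \<in> round_applicants S q prio P 0 c. (t, x) \<in> prio c}"
    by (auto simp: H_def round_applicants_iff)
  moreover have "holders S q prio P 0 c = {}"
    by (simp add: holders_def)
  moreover have "cls x c = 0"
    using assms(2) by (simp add: priority_class_def)
  moreover have "outcome x \<noteq> Some c"
    using assms(4) pref_irrefl[OF assms(1)] by auto
  ultimately show "q c \<le> card {y \<in> S. outcome y = Some c}"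
    and "\<And>y. y \<in> S \<Longrightarrow> outcome y = Some c \<Longrightarrow> outranks cls prio y x c"
    using overdemanded_college_outranks[OF assms(1,3) _ rounds] overdemanded by auto
qed

theorem outcome_stable: "stable_wrt S C q prio pref cls outcome"
proof -
  have "q c \<le> card {y \<in> S. outcome y = Some c} \<and>
      (\<forall>y \<in> S. outcome y = Some c \<longrightarrow> outranks cls prio y x c)"
    if "x \<in> S" and "c \<in> C" and "(Some c, outcome x) \<in> pref x" for x c
    using sincere_blocked[OF that(1) _ that(2,3)] sophisticated_blocked[OF that(1) _ that(2,3)]
    by (cases "x \<in> N") blast+
  then show ?thesis
    unfolding stable_wrt_def
    using outcome_range outcome_individually_rational outcome_capacity by blast
qed

end

theorem mainTheorem8:
  fixes S :: "'s set" and C :: "'c set" and N M' :: "'s set"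
    and q :: "'c \<Rightarrow> nat" and prio :: "'c \<Rightarrow> ('s \<times> 's) set"
    and pref :: "'s \<Rightarrow> ('c option \<times> 'c option) set"
    and P P' :: "'s \<Rightarrow> 'c list" and s :: 's
  assumes "finite S" and "finite C"
    and "S = N \<union> M'" and "N \<inter> M' = {}"
    and "\<And>st. st \<in> S \<Longrightarrow> strict_linear_order_on (insert None (Some ` C)) (pref st)"
    and "\<And>c. c \<in> C \<Longrightarrow> q c \<ge> 1"
    and "\<And>c. c \<in> C \<Longrightarrow> strict_linear_order_on S (prio c)"
    and "pure_nash S C q prio pref N P"
    and "pure_nash S C q prio pref N P'"
    and "s \<in> N"
  shows "boston S q prio P s = boston S q prio P' s"
proof -
  have "N \<subseteq> S"
    using assms(3) by blast
  then interpret P: boston_nash S C pref N q prio P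
    using assms(1,5-8) by unfold_locales
  interpret P': boston_nash S C pref N q prio P'
    using \<open>N \<subseteq> S\<close> assms(1,5-7,9) by unfold_locales
  interpret two_stable_matchings S C pref N q prio "priority_class C pref N"
    "boston S q prio P" "boston S q prio P'"
  proof
    show "\<And>c x y. c \<in> C \<Longrightarrow> (x, y) \<in> prio c \<Longrightarrow> (y, x) \<notin> prio c"
      using assms(7) unfolding strict_linear_order_on_def trans_def irrefl_on_def by blast
    fix x d e assume "x \<in> S" "x \<in> N" "d \<in> C" "(Some d, Some e) \<in> pref x"
    then show "priority_class C pref N x d < priority_class C pref N x e"
      using pref_rank_less[OF assms(2), of "pref x" d e] assms(5)
      by (simp add: priority_class_def strict_linear_order_on_def)
  qed (use assms(1,5) P.outcome_stable P'.outcome_stable in \<open>auto simp: priority_class_def\<close>)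
  show ?thesis
    using sincere_assignment_unique \<open>N \<subseteq> S\<close> assms(10) by blast
qed

end
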